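(* Let $n \ge 2$ and let $S = s_1, s_2, \ldots, s_m$ be a sequence of messages, each drawn from a fixed set $M$ of $n$ possible messages, which a number of clients want to send to a server (each message of $S$ is held by some client). Suppose there is a dynamic instantaneous compression algorithm which, when applied to $S$, produces an encoding of $B$ bits. Then for every $k \ge 1$ there is a dynamic asymmetric communication protocol for sending $S$ to the server with which the server sends at most $O(n^{1/k}\log n)$ bits to each client (for each message that client sends), and the clients send, in total, at most $kB + 2|S|$ bits.
   Context: A code-tree over the alphabet $M$ is a binary tree in which left edges are labelled $0$, right edges are labelled $1$, and leaves are labelled with elements of $M$; the codeword of a leaf's label is the binary string on the path from the root to that leaf. A dynamic instantaneous (prefix-free) compression algorithm consists of an encoder and a decoder which each maintain a code-tree, initialized and updated by the same deterministic rule depending only on the characters processed so far: the encoder makes a single pass over the input string, and upon reading each character $a$ it writes the codeword of $a$ in its current code-tree and then updates the code-tree; the decoder reads the encoding codeword by codeword, outputs the corresponding character and updates its code-tree in the same way. The encoding of $S$ is the concatenation of the codewords written, and $B$ is its length in bits. In the communication setting, at any time the server knows all messages it has received so far, while each client knows only its own messages and does not observe communication between the server or other clients; the server has no knowledge of the distribution of the messages (this is what "dynamic" means for a protocol). The protocol must allow the server to recover every message of $S$. Logarithms are base 2; the $O(\cdot)$ is as $n \to \infty$. *)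

theory Defs
  imports Complex_Main
begin

text \<open>An internal node has a left child
  (edge labelled 0 = False) and/or a right child (edge labelled 1 = True).\<close>

datatype ctree = Leaf nat | Node "ctree option" "ctree option"

fun ct_wf :: "ctree \<Rightarrow> bool" where
  "ct_wf (Leaf a) = True"
| "ct_wf (Node None None) = False"
| "ct_wf (Node l r) = (pred_option ct_wf l \<and> pred_option ct_wf r)"

fun ct_labels :: "ctree \<Rightarrow> nat list" where
  "ct_labels (Leaf a) = [a]"
| "ct_labels (Node l r) =
     (case l of None \<Rightarrow> [] | Some t \<Rightarrow> ct_labels t) @
     (case r of None \<Rightarrow> [] | Some t \<Rightarrow> ct_labels t)"

fun ct_codes :: "ctree \<Rightarrow> (nat \<times> bool list) list" where
  "ct_codes (Leaf a) = [(a, [])]"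
| "ct_codes (Node l r) =
     map (\<lambda>(a, w). (a, False # w)) (case l of None \<Rightarrow> [] | Some t \<Rightarrow> ct_codes t) @
     map (\<lambda>(a, w). (a, True # w)) (case r of None \<Rightarrow> [] | Some t \<Rightarrow> ct_codes t)"

definition codeword :: "ctree \<Rightarrow> nat \<Rightarrow> bool list" where
  "codeword t a = the (map_of (ct_codes t) a)"

definition code_tree :: "nat set \<Rightarrow> ctree \<Rightarrow> bool" where
  "code_tree M t \<longleftrightarrow> ct_wf t \<and> distinct (ct_labels t) \<and> set (ct_labels t) = M"

text \<open>A dynamic instantaneous compression algorithm is determined by the deterministic
  rule giving the current code-tree as a function of the characters processed so far
  (shared by encoder and decoder).\<close>
definition dyn_code_alg :: "nat set \<Rightarrow> (nat list \<Rightarrow> ctree) \<Rightarrow> bool" where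
  "dyn_code_alg M T \<longleftrightarrow> (\<forall>xs \<in> lists M. code_tree M (T xs))"

definition enc_length :: "(nat list \<Rightarrow> ctree) \<Rightarrow> nat list \<Rightarrow> nat" where
  "enc_length T S = (\<Sum>i<length S. length (codeword (T (take i S)) (S ! i)))"

datatype speaker = Srv | Cli | Stop

text \<open>Server history: list of (client, message, transcript) of all earlier messages.
  Client history: list of (message, transcript) of the client's own earlier messages.
  In the exchange for one message, bits are sent one at a time; who speaks next
  (or whether the exchange is over) is decided by each party from its own knowledge,
  and the two decisions must agree.  The server decides with its knowledge (history,
  identity of current client, transcript so far); the client with its knowledge
  (its identity, own history, current message, transcript so far).\<close>
record protocol =
  s_turn :: "(nat \<times> nat \<times> bool list) list \<Rightarrow> nat \<Rightarrow> bool list \<Rightarrow> speaker"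
  s_bit  :: "(nat \<times> nat \<times> bool list) list \<Rightarrow> nat \<Rightarrow> bool list \<Rightarrow> bool"
  s_out  :: "(nat \<times> nat \<times> bool list) list \<Rightarrow> nat \<Rightarrow> bool list \<Rightarrow> nat"
  c_turn :: "nat \<Rightarrow> (nat \<times> bool list) list \<Rightarrow> nat \<Rightarrow> bool list \<Rightarrow> speaker"
  c_bit  :: "nat \<Rightarrow> (nat \<times> bool list) list \<Rightarrow> nat \<Rightarrow> bool list \<Rightarrow> bool"

definition exch_ok :: "protocol \<Rightarrow> (nat \<times> nat \<times> bool list) list \<Rightarrow> nat \<Rightarrow>
    (nat \<times> bool list) list \<Rightarrow> nat \<Rightarrow> bool list \<Rightarrow> bool" where
  "exch_ok P sh c ch x t \<longleftrightarrow>
     (\<forall>j < length t.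
        s_turn P sh c (take j t) = c_turn P c ch x (take j t) \<and>
        s_turn P sh c (take j t) \<noteq> Stop \<and>
        t ! j = (if s_turn P sh c (take j t) = Srv then s_bit P sh c (take j t)
                 else c_bit P c ch x (take j t))) \<and>
     s_turn P sh c t = Stop \<and> c_turn P c ch x t = Stop"

definition srv_bits :: "protocol \<Rightarrow> (nat \<times> nat \<times> bool list) list \<Rightarrow> nat \<Rightarrow> bool list \<Rightarrow> nat" where
  "srv_bits P sh c t = card {j. j < length t \<and> s_turn P sh c (take j t) = Srv}"

definition cli_bits :: "protocol \<Rightarrow> (nat \<times> nat \<times> bool list) list \<Rightarrow> nat \<Rightarrow> bool list \<Rightarrow> nat" where
  "cli_bits P sh c t = card {j. j < length t \<and> s_turn P sh c (take j t) = Cli}"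

text \<open>Histories for message i, given the messages S, the owner map own (client holding
  each message) and transcripts ts.\<close>
definition shist :: "nat list \<Rightarrow> (nat \<Rightarrow> nat) \<Rightarrow> bool list list \<Rightarrow> nat \<Rightarrow>
    (nat \<times> nat \<times> bool list) list" where
  "shist S own ts i = map (\<lambda>j. (own j, S ! j, ts ! j)) [0..<i]"

definition chist :: "nat list \<Rightarrow> (nat \<Rightarrow> nat) \<Rightarrow> bool list list \<Rightarrow> nat \<Rightarrow>
    (nat \<times> bool list) list" where
  "chist S own ts i = map (\<lambda>j. (S ! j, ts ! j)) (filter (\<lambda>j. own j = own i) [0..<i])"

definition run_ok :: "protocol \<Rightarrow> nat list \<Rightarrow> (nat \<Rightarrow> nat) \<Rightarrow> bool list list \<Rightarrow> bool" where
  "run_ok P S own ts \<longleftrightarrow> length ts = length S \<and>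
     (\<forall>i < length S. exch_ok P (shist S own ts i) (own i) (chist S own ts i) (S ! i) (ts ! i))"

end

theory Submission
  imports Defs "HOL-Library.FuncSet" "HOL-Library.Discrete_Functions"
begin

text \<open>Let n = card M, f = floor_log n and D = f div k. Before each message the server, which
  knows all earlier messages and hence the current code-tree, announces the table that sends each
  binary word of length at most D to the message it encodes, if any. There are fewer than 2^(D+1)
  such words and each entry takes f + 1 bits, so a fixed-length encoding of the table needs
  L = 2^(D+1) (f + 1) = O(n^(1/k) log n) bits. The client decodes the table and replies with a flag
  bit followed either by its codeword, if that is at most D long, or else by an (f + 1)-bit index of
  its message; in the second case the codeword has length l > D, so f + 1 <= k l. Either way the
  client sends at most k l + 1 bits, and since the code is prefix-free the server, which knows the
  tree, recognises the end of the reply.\<close>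

lemma map_fst_ct_codes: "map fst (ct_codes t) = ct_labels t"
  by (induction t rule: ct_codes.induct)
    (auto split: option.splits simp: comp_def case_prod_unfold)

lemma ct_codes_Node_nonempty: "p \<in> set (ct_codes (Node l r)) \<Longrightarrow> snd p \<noteq> []"
  by (auto split: option.splits)

lemma ct_codes_prefix_free:
  "(a, v) \<in> set (ct_codes t) \<Longrightarrow> (b, take m v) \<in> set (ct_codes t) \<Longrightarrow> length v \<le> m"
proof (induction t arbitrary: a b v m rule: ct_codes.induct)
  case (2 l r)
  obtain m' where m: "m = Suc m'"
    using "2.prems"(2) ct_codes_Node_nonempty[of "(b, take m v)" l r] by (cases m) auto
  from "2.prems"(1) obtain bit v' where v: "v = bit # v'" by (auto split: option.splits)
  show ?case
  proof (cases bit)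
    case False
    then obtain t where t: "l = Some t" "(a, v') \<in> set (ct_codes t)"
      using "2.prems"(1) v by (auto split: option.splits)
    have "(b, take m' v') \<in> set (ct_codes t)"
      using "2.prems"(2) v m False t by (auto split: option.splits)
    then show ?thesis using "2.IH"(1)[OF t] m v by simp
  next
    case True
    then obtain t where t: "r = Some t" "(a, v') \<in> set (ct_codes t)"
      using "2.prems"(1) v by (auto split: option.splits)
    have "(b, take m' v') \<in> set (ct_codes t)"
      using "2.prems"(2) v m True t by (auto split: option.splits)
    then show ?thesis using "2.IH"(2)[OF t] m v by simp
  qed
qed simp

lemma distinct_map_snd_ct_codes: "distinct (map snd (ct_codes t))"
proof (induction t rule: ct_codes.induct)
  case (2 l r)
  have map_snd: "map snd (map (\<lambda>(a, w). (a, b # w)) xs) = map (Cons b) (map snd xs)"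
    for b and xs :: "(nat \<times> bool list) list"
    by (induction xs) auto
  from 2 show ?case
    by (auto simp: map_snd distinct_map inj_on_def split: option.splits; fastforce)
qed simp

lemma codeword_in_ct_codes:
  assumes "code_tree M t" "x \<in> M"
  shows "(x, codeword t x) \<in> set (ct_codes t)"
proof -
  have "x \<in> fst ` set (ct_codes t)"
    using assms map_fst_ct_codes[of t] unfolding code_tree_def by (metis list.set_map)
  then obtain v where "map_of (ct_codes t) x = Some v"
    by (metis map_of_eq_None_iff not_Some_eq)
  then show ?thesis unfolding codeword_def by (simp add: map_of_SomeD)
qed

lemma inj_on_codeword:
  assumes "code_tree M t"
  shows "inj_on (codeword t) M"
proof (rule inj_onI)
  fix x y assume "x \<in> M" "y \<in> M" "codeword t x = codeword t y"
  moreover have "inj_on snd (set (ct_codes t))"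
    using distinct_map_snd_ct_codes[of t] by (simp add: distinct_map)
  ultimately show "x = y"
    using codeword_in_ct_codes[OF assms] by (metis inj_on_def prod.inject snd_conv)
qed

lemma codeword_prefix_free:
  assumes "code_tree M t" "x \<in> M" "y \<in> M" "codeword t y = take m (codeword t x)"
  shows "length (codeword t x) \<le> m"
  using ct_codes_prefix_free codeword_in_ct_codes[OF assms(1)] assms(2-4) by metis

definition short_code_tables :: "nat \<Rightarrow> nat set \<Rightarrow> (bool list \<Rightarrow> nat option) set" where
  "short_code_tables D M = (\<Pi>\<^sub>E c \<in> {c. length c \<le> D}. insert None (Some ` M))"

lemma card_short_code_tables_le:
  assumes "finite M" "card M < 2 ^ w"
  shows "card (short_code_tables D M) \<le> 2 ^ (2 ^ (D + 1) * w)"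
proof -
  let ?C = "{c :: bool list. length c \<le> D}"
  have "finite ?C" using finite_lists_length_le[of "UNIV :: bool set" D] by simp
  have "card ?C \<le> 2 ^ (D + 1)"
  proof -
    have "(\<Sum>i\<le>D. (2::nat) ^ i) < 2 ^ (D + 1)" by (induction D) auto
    then show ?thesis using card_lists_length_le[of "UNIV :: bool set" D] by simp
  qed
  have "card (short_code_tables D M) = (card M + 1) ^ card ?C"
    unfolding short_code_tables_def using \<open>finite ?C\<close> assms(1) by (simp add: card_PiE card_image)
  also have "\<dots> \<le> (2 ^ w) ^ card ?C"
    using assms(2) by (intro power_mono) auto
  also have "\<dots> \<le> (2 ^ w) ^ (2 ^ (D + 1))"
    using \<open>card ?C \<le> 2 ^ (D + 1)\<close> by (intro power_increasing) auto
  finally show ?thesis by (simp add: power_mult[symmetric] mult.commute)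
qed

lemma exists_fixed_length_code:
  assumes "finite A" "card A \<le> 2 ^ m"
  obtains f :: "'a \<Rightarrow> bool list" where "inj_on f A" "\<And>x. x \<in> A \<Longrightarrow> length (f x) = m"
proof -
  have words: "finite {xs :: bool list. length xs = m}" "card {xs :: bool list. length xs = m} = 2 ^ m"
    using finite_lists_length_eq[of "UNIV :: bool set" m] card_lists_length_eq[of "UNIV :: bool set" m]
    by simp_all
  obtain f :: "'a \<Rightarrow> bool list" where "f ` A \<subseteq> {xs. length xs = m}" "inj_on f A"
    using card_le_inj[OF assms(1) words(1)] assms(2) unfolding words(2) by blast
  then show ?thesis by (intro that) auto
qed

locale short_code_protocol =
  fixes M :: "nat set" and T :: "nat list \<Rightarrow> ctree" and D w L :: nat
    and index :: "nat \<Rightarrow> bool list" and enc :: "(bool list \<Rightarrow> nat option) \<Rightarrow> bool list"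
  assumes alg: "dyn_code_alg M T"
    and inj_index: "inj_on index M"
    and length_index: "\<And>x. x \<in> M \<Longrightarrow> length (index x) = w"
    and inj_enc: "inj_on enc (short_code_tables D M)"
    and length_enc: "\<And>h. h \<in> short_code_tables D M \<Longrightarrow> length (enc h) = L"
begin

definition short_code_table :: "ctree \<Rightarrow> bool list \<Rightarrow> nat option" where
  "short_code_table t = restrict (\<lambda>c. if c \<in> codeword t ` M
     then Some (SOME y. y \<in> M \<and> codeword t y = c) else None) {c. length c \<le> D}"

definition announce :: "ctree \<Rightarrow> bool list" where
  "announce t = enc (short_code_table t)"

definition reply :: "nat \<Rightarrow> bool list \<Rightarrow> bool list" where
  "reply x \<sigma> = (let h = inv_into (short_code_tables D M) enc \<sigma> in
     if \<exists>c. length c \<le> D \<and> h c = Some x then False # (SOME c. length c \<le> D \<and> h c = Some x)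
     else True # index x)"

definition reply_complete :: "ctree \<Rightarrow> bool list \<Rightarrow> bool" where
  "reply_complete t v = (case v of [] \<Rightarrow> False
     | b # r \<Rightarrow> if b then length r = w else r \<in> codeword t ` M)"

definition current_tree :: "(nat \<times> nat \<times> bool list) list \<Rightarrow> ctree" where
  "current_tree sh = T (map (fst \<circ> snd) sh)"

definition proto :: protocol where
  "proto = \<lparr>
     s_turn = \<lambda>sh c u. if length u < L then Srv
       else if reply_complete (current_tree sh) (drop L u) then Stop else Cli,
     s_bit = \<lambda>sh c u. announce (current_tree sh) ! length u,
     s_out = \<lambda>sh c u. (case drop L u of [] \<Rightarrow> undefined
       | b # r \<Rightarrow> if b then inv_into M index r
                      else (SOME y. y \<in> M \<and> codeword (current_tree sh) y = r)),
     c_turn = \<lambda>c ch x u. if length u < L then Srv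
       else if length u - L < length (reply x (take L u)) then Cli else Stop,
     c_bit = \<lambda>c ch x u. reply x (take L u) ! (length u - L) \<rparr>"

lemma short_code_table_in_tables: "short_code_table t \<in> short_code_tables D M"
proof -
  have "(SOME y. y \<in> M \<and> codeword t y = c) \<in> M" if "c \<in> codeword t ` M" for c
    using that by (metis (mono_tags, lifting) imageE someI)
  then show ?thesis unfolding short_code_table_def short_code_tables_def by auto
qed

lemma short_code_table_eq_Some:
  assumes "code_tree M t" "x \<in> M" "length c \<le> D"
  shows "short_code_table t c = Some x \<longleftrightarrow> codeword t x = c"
proof
  assume "short_code_table t c = Some x"
  then have "c \<in> codeword t ` M" and "x = (SOME y. y \<in> M \<and> codeword t y = c)"
    using assms(3) unfolding short_code_table_def by (auto split: if_splits)
  then show "codeword t x = c" by (metis (mono_tags, lifting) imageE someI)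
next
  assume "codeword t x = c"
  moreover from this have "(SOME y. y \<in> M \<and> codeword t y = c) = x"
    using assms(2) inj_on_codeword[OF assms(1)] by (auto intro!: some_equality dest: inj_onD)
  ultimately show "short_code_table t c = Some x"
    using assms unfolding short_code_table_def by auto
qed

lemma length_announce: "length (announce t) = L"
  unfolding announce_def using length_enc short_code_table_in_tables by blast

lemma reply_announce:
  assumes "code_tree M t" "x \<in> M"
  shows "reply x (announce t) =
    (if length (codeword t x) \<le> D then False # codeword t x else True # index x)"
proof -
  have "inv_into (short_code_tables D M) enc (announce t) = short_code_table t"
    unfolding announce_def using inj_enc short_code_table_in_tables by (rule inv_into_f_f)
  then show ?thesis
    unfolding reply_def Let_def using short_code_table_eq_Some[OF assms] by auto
qed

lemma length_reply_announce_le: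
  assumes "code_tree M t" "x \<in> M" "1 \<le> k" "w \<le> k * (D + 1)"
  shows "length (reply x (announce t)) \<le> k * length (codeword t x) + 1"
proof (cases "length (codeword t x) \<le> D")
  case True
  have "length (codeword t x) \<le> k * length (codeword t x)" using assms(3) by simp
  then show ?thesis using True reply_announce[OF assms(1,2)] by simp
next
  case False
  then have "w \<le> k * length (codeword t x)"
    using assms(4) mult_le_mono2[of "D + 1" "length (codeword t x)" k] by linarith
  then show ?thesis using False reply_announce[OF assms(1,2)] length_index[OF assms(2)] by simp
qed

definition transcript :: "ctree \<Rightarrow> nat \<Rightarrow> bool list" where
  "transcript t x = announce t @ reply x (announce t)"

lemma reply_complete_take_reply:
  assumes "code_tree M t" "x \<in> M"
  shows "reply_complete t (take m (reply x (announce t))) \<longleftrightarrow> length (reply x (announce t)) \<le> m"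
proof (cases m)
  case 0
  then show ?thesis using reply_announce[OF assms] by (simp add: reply_complete_def)
next
  case (Suc m')
  show ?thesis
  proof (cases "length (codeword t x) \<le> D")
    case True
    then have reply: "reply x (announce t) = False # codeword t x"
      using reply_announce[OF assms] by simp
    have "take m' (codeword t x) \<in> codeword t ` M \<longleftrightarrow> length (codeword t x) \<le> m'"
    proof
      assume "take m' (codeword t x) \<in> codeword t ` M"
      then obtain y where y: "y \<in> M" "codeword t y = take m' (codeword t x)"
        by (metis imageE)
      show "length (codeword t x) \<le> m'" using codeword_prefix_free[OF assms(1,2) y] .
    next
      assume "length (codeword t x) \<le> m'"
      then have "take m' (codeword t x) = codeword t x" by simp
      then show "take m' (codeword t x) \<in> codeword t ` M" using assms(2) by (metis imageI)
    qed
    then show ?thesis unfolding reply Suc reply_complete_def by simp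
  next
    case False
    then have reply: "reply x (announce t) = True # index x"
      using reply_announce[OF assms] by simp
    have "reply_complete t (take m (reply x (announce t))) \<longleftrightarrow> w \<le> m'"
      unfolding reply Suc reply_complete_def using length_index[OF assms(2)] by (simp add: min_def)
    moreover have "length (reply x (announce t)) \<le> m \<longleftrightarrow> w \<le> m'"
      unfolding reply Suc using length_index[OF assms(2)] by auto
    ultimately show ?thesis by blast
  qed
qed

lemma length_transcript: "length (transcript t x) = L + length (reply x (announce t))"
  by (simp add: transcript_def length_announce)

lemma take_transcript:
  assumes "L \<le> j"
  shows "take L (take j (transcript t x)) = announce t"
    and "drop L (take j (transcript t x)) = take (j - L) (reply x (announce t))"
  using assms length_announce[of t] by (simp_all add: transcript_def min_def)

lemma s_turn_transcript:
  assumes "code_tree M (current_tree sh)" "x \<in> M" "j \<le> length (transcript (current_tree sh) x)"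
  shows "s_turn proto sh c (take j (transcript (current_tree sh) x)) =
    (if j < L then Srv else if j = length (transcript (current_tree sh) x) then Stop else Cli)"
proof (cases "j < L")
  case True
  with assms(3) show ?thesis by (simp add: proto_def)
next
  case False
  with assms(3) show ?thesis
    using reply_complete_take_reply[OF assms(1,2), of "j - L"] take_transcript length_transcript
    by (auto simp: proto_def)
qed

lemma c_turn_transcript:
  assumes "j \<le> length (transcript t x)"
  shows "c_turn proto c ch x (take j (transcript t x)) =
    (if j < L then Srv else if j = length (transcript t x) then Stop else Cli)"
proof (cases "j < L")
  case True
  with assms show ?thesis by (simp add: proto_def)
next
  case False
  then have "L \<le> j" by simp
  from take_transcript[OF this] False assms show ?thesis
    using length_transcript[of t x] by (auto simp: proto_def)
qed

lemma nth_transcript: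
  assumes "j < length (transcript (current_tree sh) x)"
  defines "u \<equiv> take j (transcript (current_tree sh) x)"
  shows "transcript (current_tree sh) x ! j =
    (if j < L then s_bit proto sh c u else c_bit proto c ch x u)"
proof -
  have length_u: "length u = j" using assms(1) unfolding u_def by simp
  show ?thesis
  proof (cases "j < L")
    case True
    with length_u assms(1) show ?thesis
      by (simp add: proto_def transcript_def nth_append length_announce)
  next
    case False
    have "take L u = announce (current_tree sh)"
      unfolding u_def by (rule take_transcript(1)) (use False in simp)
    with length_u False show ?thesis
      by (simp add: proto_def transcript_def nth_append length_announce)
  qed
qed

lemma exch_ok_transcript:
  assumes "code_tree M (current_tree sh)" "x \<in> M"
  shows "exch_ok proto sh c ch x (transcript (current_tree sh) x)"
proof -
  let ?tr = "transcript (current_tree sh) x"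
  have "s_turn proto sh c (take j ?tr) = c_turn proto c ch x (take j ?tr)"
    and "s_turn proto sh c (take j ?tr) \<noteq> Stop"
    and "?tr ! j = (if s_turn proto sh c (take j ?tr) = Srv then s_bit proto sh c (take j ?tr)
                    else c_bit proto c ch x (take j ?tr))"
    if "j < length ?tr" for j
    using s_turn_transcript[OF assms, of j c] c_turn_transcript[of j "current_tree sh" x c ch]
      nth_transcript[OF that, of c ch] that
    by auto
  moreover have "s_turn proto sh c ?tr = Stop" and "c_turn proto c ch x ?tr = Stop"
    using s_turn_transcript[OF assms, of "length ?tr" c]
      c_turn_transcript[of "length ?tr" "current_tree sh" x c ch] length_transcript
    by simp_all
  ultimately show ?thesis unfolding exch_ok_def by blast
qed

lemma s_out_transcript:
  assumes "code_tree M (current_tree sh)" "x \<in> M"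
  shows "s_out proto sh c (transcript (current_tree sh) x) = x"
  using reply_announce[OF assms] inj_on_codeword[OF assms(1)] inj_index assms(2) length_announce
  by (auto simp: proto_def transcript_def intro!: some_equality dest: inj_onD)

lemma bits_transcript:
  assumes "code_tree M (current_tree sh)" "x \<in> M"
  shows "srv_bits proto sh c (transcript (current_tree sh) x) = L"
    and "cli_bits proto sh c (transcript (current_tree sh) x)
           = length (reply x (announce (current_tree sh)))"
proof -
  let ?tr = "transcript (current_tree sh) x"
  have "{j. j < length ?tr \<and> s_turn proto sh c (take j ?tr) = Srv} = {..<L}"
    and "{j. j < length ?tr \<and> s_turn proto sh c (take j ?tr) = Cli} = {L..<length ?tr}"
    using s_turn_transcript[OF assms] length_transcript by (auto split: if_splits)
  then show "srv_bits proto sh c ?tr = L"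
    and "cli_bits proto sh c ?tr = length (reply x (announce (current_tree sh)))"
    unfolding srv_bits_def cli_bits_def length_transcript by simp_all
qed

lemma current_tree_shist:
  assumes "i \<le> length S"
  shows "current_tree (shist S own ts i) = T (take i S)"
proof -
  have "map (fst \<circ> snd) (shist S own ts i) = take i S"
    using assms by (auto simp: shist_def intro!: nth_equalityI)
  then show ?thesis unfolding current_tree_def by simp
qed

definition transcripts :: "nat list \<Rightarrow> bool list list" where
  "transcripts S = map (\<lambda>i. transcript (T (take i S)) (S ! i)) [0..<length S]"

lemma proto_run:
  assumes "S \<in> lists M" "1 \<le> k" "w \<le> k * (D + 1)"
  defines "ts \<equiv> transcripts S"
  shows "run_ok proto S own ts \<and>
    (\<forall>i < length S. s_out proto (shist S own ts i) (own i) (ts ! i) = S ! i) \<and>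
    (\<forall>i < length S. srv_bits proto (shist S own ts i) (own i) (ts ! i) = L) \<and>
    (\<Sum>i < length S. cli_bits proto (shist S own ts i) (own i) (ts ! i))
      \<le> k * enc_length T S + length S"
proof -
  have exchange: "exch_ok proto (shist S own ts i) (own i) (chist S own ts i) (S ! i) (ts ! i)"
    and decoded: "s_out proto (shist S own ts i) (own i) (ts ! i) = S ! i"
    and server: "srv_bits proto (shist S own ts i) (own i) (ts ! i) = L"
    and client: "cli_bits proto (shist S own ts i) (own i) (ts ! i)
                   \<le> k * length (codeword (T (take i S)) (S ! i)) + 1"
    if "i < length S" for i
  proof -
    have tree_i: "current_tree (shist S own ts i) = T (take i S)"
      using that by (simp add: current_tree_shist)
    have "take i S \<in> lists M" using assms(1) by (meson in_listsD in_listsI in_set_takeD)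
    then have tree: "code_tree M (current_tree (shist S own ts i))"
      using alg tree_i unfolding dyn_code_alg_def by simp
    have message: "S ! i \<in> M" using assms(1) that by (simp add: in_lists_conv_set)
    have ts_i: "ts ! i = transcript (current_tree (shist S own ts i)) (S ! i)"
      using that tree_i unfolding ts_def transcripts_def by simp
    show "exch_ok proto (shist S own ts i) (own i) (chist S own ts i) (S ! i) (ts ! i)"
      unfolding ts_i by (rule exch_ok_transcript[OF tree message])
    show "s_out proto (shist S own ts i) (own i) (ts ! i) = S ! i"
      unfolding ts_i by (rule s_out_transcript[OF tree message])
    show "srv_bits proto (shist S own ts i) (own i) (ts ! i) = L"
      unfolding ts_i by (rule bits_transcript(1)[OF tree message])
    show "cli_bits proto (shist S own ts i) (own i) (ts ! i)
            \<le> k * length (codeword (T (take i S)) (S ! i)) + 1"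
      using bits_transcript(2)[OF tree message, of "own i"]
        length_reply_announce_le[OF tree message assms(2,3)]
      unfolding ts_i tree_i by simp
  qed
  have "(\<Sum>i < length S. cli_bits proto (shist S own ts i) (own i) (ts ! i))
      \<le> (\<Sum>i < length S. k * length (codeword (T (take i S)) (S ! i)) + 1)"
    by (intro sum_mono client) simp
  also have "\<dots> = k * enc_length T S + length S"
    unfolding enc_length_def sum.distrib sum_distrib_left by simp
  finally have "(\<Sum>i < length S. cli_bits proto (shist S own ts i) (own i) (ts ! i))
      \<le> k * enc_length T S + length S" .
  moreover have "length ts = length S" unfolding ts_def transcripts_def by simp
  ultimately show ?thesis
    using exchange decoded server unfolding run_ok_def by simp
qed

end

lemma short_code_cost:
  fixes n k :: nat
  assumes "2 \<le> n" "1 \<le> k"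
  shows "real (2 ^ (floor_log n div k + 1) * (floor_log n + 1))
           \<le> 4 * real n powr (1 / real k) * log 2 (real n)"
proof -
  define f where "f = floor_log n"
  define D where "D = f div k"
  have "2 ^ f \<le> n" unfolding f_def using assms(1) by (simp add: floor_log_exp2_le)
  then have f_le_log: "real f \<le> log 2 (real n)" by (rule le_log2_of_power)
  have "1 \<le> f" unfolding f_def using floor_log_le_iff[OF assms(1)] floor_log_power[of 1] by simp
  have "real (D * k) \<le> log 2 (real n)"
    using f_le_log unfolding D_def by (meson div_times_less_eq_dividend of_nat_le_iff order_trans)
  then have "real D \<le> log 2 (real n) / real k"
    using assms(2) by (simp add: le_divide_eq)
  then have "2 powr real D \<le> 2 powr (log 2 (real n) / real k)" by simp
  also have "\<dots> = (2 powr log 2 (real n)) powr (1 / real k)" by (simp add: powr_powr)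
  also have "\<dots> = real n powr (1 / real k)" using assms(1) by simp
  finally have two_pow_D: "real (2 ^ D) \<le> real n powr (1 / real k)" by (simp add: powr_realpow)
  have "real (2 ^ (D + 1) * (f + 1)) = 2 * real (2 ^ D) * real (f + 1)" by (simp add: algebra_simps)
  also have "\<dots> \<le> 2 * real n powr (1 / real k) * (2 * log 2 (real n))"
    using two_pow_D f_le_log \<open>1 \<le> f\<close> by (intro mult_mono) auto
  finally show ?thesis unfolding D_def f_def by simp
qed

lemma exists_short_code_protocol:
  assumes "1 \<le> k" "finite M" "2 \<le> card M" "dyn_code_alg M T"
  shows "\<exists>P. \<forall>S \<in> lists M. \<forall>own. \<exists>ts. run_ok P S own ts \<and>
    (\<forall>i < length S. s_out P (shist S own ts i) (own i) (ts ! i) = S ! i) \<and>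
    (\<forall>i < length S. real (srv_bits P (shist S own ts i) (own i) (ts ! i))
       \<le> 4 * real (card M) powr (1 / real k) * log 2 (real (card M))) \<and>
    (\<Sum>i < length S. cli_bits P (shist S own ts i) (own i) (ts ! i))
      \<le> k * enc_length T S + 2 * length S"
proof -
  define f where "f = floor_log (card M)"
  define D where "D = f div k"
  define L where "L = 2 ^ (D + 1) * (f + 1)"
  have "card M < 2 ^ (f + 1)" unfolding f_def using floor_log_exp2_gt by simp
  then obtain index :: "nat \<Rightarrow> bool list"
    where index: "inj_on index M" "\<And>x. x \<in> M \<Longrightarrow> length (index x) = f + 1"
    using exists_fixed_length_code[OF assms(2)] by (metis less_imp_le)
  have "finite (short_code_tables D M)"
    unfolding short_code_tables_def using assms(2) finite_lists_length_le[of "UNIV :: bool set" D]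
    by (intro finite_PiE) auto
  then obtain enc :: "(bool list \<Rightarrow> nat option) \<Rightarrow> bool list"
    where enc: "inj_on enc (short_code_tables D M)"
      "\<And>h. h \<in> short_code_tables D M \<Longrightarrow> length (enc h) = L"
    using exists_fixed_length_code card_short_code_tables_le[OF assms(2) \<open>card M < 2 ^ (f + 1)\<close>]
    unfolding L_def by blast
  interpret short_code_protocol M T D "f + 1" L index enc
    using assms(4) index enc by unfold_locales
  have "f < (D + 1) * k"
    using div_less_iff_less_mult[of k f "D + 1"] assms(1) unfolding D_def by simp
  then have fallback: "f + 1 \<le> k * (D + 1)" by (simp add: mult.commute)
  have "real L \<le> 4 * real (card M) powr (1 / real k) * log 2 (real (card M))"
    unfolding L_def D_def f_def using short_code_cost[OF assms(3,1)] .
  then show ?thesis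
    apply (intro exI[of _ proto] ballI allI)
    subgoal for S own
      using proto_run[OF _ assms(1) fallback, where S = S and own = own]
      by (intro exI[of _ "transcripts S"]) auto
    done
qed

theorem theorem1:
  "\<forall>k::nat. k \<ge> 1 \<longrightarrow> (\<exists>C::real. C > 0 \<and>
     (\<forall>(M::nat set) T. finite M \<and> card M \<ge> 2 \<and> dyn_code_alg M T \<longrightarrow>
       (\<exists>P::protocol. \<forall>S \<in> lists M. \<forall>own::nat \<Rightarrow> nat.
          \<exists>ts. run_ok P S own ts \<and>
            (\<forall>i < length S. s_out P (shist S own ts i) (own i) (ts ! i) = S ! i) \<and>
            (\<forall>i < length S. real (srv_bits P (shist S own ts i) (own i) (ts ! i))
                 \<le> C * real (card M) powr (1 / real k) * log 2 (real (card M))) \<and>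
            (\<Sum>i < length S. cli_bits P (shist S own ts i) (own i) (ts ! i))
                 \<le> k * enc_length T S + 2 * length S)))"
  by (intro allI impI exI[of _ 4] conjI, simp) (blast intro: exists_short_code_protocol)

end
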